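(* Let $G$ be a 5-vertex-critical $(P_5,\text{chair})$-free graph and let $C=v_1v_2v_3v_4v_5v_1$ be an induced $C_5$ in $G$. Then for every $1\le i\le 5$, every vertex of $V(G)\setminus(S^2_3(i)\cup S_4(i)\cup S_5)$ is either complete or anticomplete to $S^2_3(i)$.
   Context: All graphs are finite and simple; $P_5$ is the path on 5 vertices; the chair is a $P_4$ plus a vertex adjacent to exactly one of the two middle vertices of the $P_4$; "$H$-free" means no induced subgraph isomorphic to $H$; $G$ is $k$-vertex-critical if $\chi(G)=k$ and $\chi(G-v)<k$ for all $v$. Indices modulo 5; for $v\notin V(C)$ let $N_C(v)=N(v)\cap V(C)$. $S^2_3(i)=\{v\notin V(C): N_C(v)=\{v_{i-2},v_i,v_{i+2}\}\}$, $S_4(i)=\{v\notin V(C): N_C(v)=\{v_{i-2},v_{i-1},v_{i+1},v_{i+2}\}\}$, $S_5=\{v\notin V(C): N_C(v)=V(C)\}$. Complete/anticomplete: adjacent/nonadjacent to every vertex of the set. *)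

theory Defs
  imports Main
begin

definition simple_graph :: "'a set \<Rightarrow> ('a \<Rightarrow> 'a \<Rightarrow> bool) \<Rightarrow> bool" where
  "simple_graph V E \<longleftrightarrow> finite V \<and> (\<forall>x y. E x y \<longrightarrow> x \<in> V \<and> y \<in> V)
     \<and> (\<forall>x y. E x y \<longrightarrow> E y x) \<and> (\<forall>x. \<not> E x x)"

definition colorable :: "'a set \<Rightarrow> ('a \<Rightarrow> 'a \<Rightarrow> bool) \<Rightarrow> nat \<Rightarrow> bool" where
  "colorable V E k \<longleftrightarrow> (\<exists>c :: 'a \<Rightarrow> nat. (\<forall>v\<in>V. c v < k)
      \<and> (\<forall>u\<in>V. \<forall>v\<in>V. E u v \<longrightarrow> c u \<noteq> c v))"

definition chromatic_number :: "'a set \<Rightarrow> ('a \<Rightarrow> 'a \<Rightarrow> bool) \<Rightarrow> nat" where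
  "chromatic_number V E = (LEAST k. colorable V E k)"

text \<open>k-vertex-critical: chi(G) = k and chi(G - v) < k for every vertex v.
  G - v is the subgraph induced by V - {v} (colourings only look at edges inside the set).\<close>
definition vertex_critical :: "'a set \<Rightarrow> ('a \<Rightarrow> 'a \<Rightarrow> bool) \<Rightarrow> nat \<Rightarrow> bool" where
  "vertex_critical V E k \<longleftrightarrow> chromatic_number V E = k
     \<and> (\<forall>v\<in>V. chromatic_number (V - {v}) E < k)"

definition has_induced :: "'a set \<Rightarrow> ('a \<Rightarrow> 'a \<Rightarrow> bool) \<Rightarrow> 'b set \<Rightarrow> ('b \<Rightarrow> 'b \<Rightarrow> bool) \<Rightarrow> bool" where
  "has_induced V E VH EH \<longleftrightarrow> (\<exists>f. inj_on f VH \<and> f ` VH \<subseteq> V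
      \<and> (\<forall>x\<in>VH. \<forall>y\<in>VH. E (f x) (f y) \<longleftrightarrow> EH x y))"

definition H_free :: "'a set \<Rightarrow> ('a \<Rightarrow> 'a \<Rightarrow> bool) \<Rightarrow> 'b set \<Rightarrow> ('b \<Rightarrow> 'b \<Rightarrow> bool) \<Rightarrow> bool" where
  "H_free V E VH EH \<longleftrightarrow> \<not> has_induced V E VH EH"

definition P5_E :: "nat \<Rightarrow> nat \<Rightarrow> bool" where
  "P5_E x y \<longleftrightarrow> x = y + 1 \<or> y = x + 1"

definition chair_E :: "nat \<Rightarrow> nat \<Rightarrow> bool" where
  "chair_E x y \<longleftrightarrow> (x < 4 \<and> y < 4 \<and> (x = y + 1 \<or> y = x + 1))
     \<or> {x, y} = {1, 4}"

text \<open>v 0, ..., v 4 form an induced C5 (v_i adjacent v_{i+1 mod 5}); indices are taken mod 5,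
  so the paper's v_1..v_5 correspond to v 1, ..., v 4, v 0.\<close>
definition induced_C5 :: "'a set \<Rightarrow> ('a \<Rightarrow> 'a \<Rightarrow> bool) \<Rightarrow> (nat \<Rightarrow> 'a) \<Rightarrow> bool" where
  "induced_C5 V E v \<longleftrightarrow> (\<forall>i<5. v i \<in> V) \<and> inj_on v {..<5}
     \<and> (\<forall>i<5. \<forall>j<5. E (v i) (v j) \<longleftrightarrow> (j = (i + 1) mod 5 \<or> i = (j + 1) mod 5))"

definition C5_set :: "(nat \<Rightarrow> 'a) \<Rightarrow> 'a set" where
  "C5_set v = v ` {..<5}"

definition N_C :: "('a \<Rightarrow> 'a \<Rightarrow> bool) \<Rightarrow> (nat \<Rightarrow> 'a) \<Rightarrow> 'a \<Rightarrow> 'a set" where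
  "N_C E v u = {w \<in> C5_set v. E u w}"

text \<open>S^2_3(i): N_C = {v_{i-2}, v_i, v_{i+2}}  (i-2 = i+3 mod 5).\<close>
definition S23 :: "'a set \<Rightarrow> ('a \<Rightarrow> 'a \<Rightarrow> bool) \<Rightarrow> (nat \<Rightarrow> 'a) \<Rightarrow> nat \<Rightarrow> 'a set" where
  "S23 V E v i = {u \<in> V - C5_set v.
      N_C E v u = {v ((i + 3) mod 5), v (i mod 5), v ((i + 2) mod 5)}}"

text \<open>S_4(i): N_C = {v_{i-2}, v_{i-1}, v_{i+1}, v_{i+2}}.\<close>
definition S4 :: "'a set \<Rightarrow> ('a \<Rightarrow> 'a \<Rightarrow> bool) \<Rightarrow> (nat \<Rightarrow> 'a) \<Rightarrow> nat \<Rightarrow> 'a set" where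
  "S4 V E v i = {u \<in> V - C5_set v.
      N_C E v u = {v ((i + 3) mod 5), v ((i + 4) mod 5), v ((i + 1) mod 5), v ((i + 2) mod 5)}}"

definition S5 :: "'a set \<Rightarrow> ('a \<Rightarrow> 'a \<Rightarrow> bool) \<Rightarrow> (nat \<Rightarrow> 'a) \<Rightarrow> 'a set" where
  "S5 V E v = {u \<in> V - C5_set v. N_C E v u = C5_set v}"

definition complete_to :: "('a \<Rightarrow> 'a \<Rightarrow> bool) \<Rightarrow> 'a \<Rightarrow> 'a set \<Rightarrow> bool" where
  "complete_to E x S \<longleftrightarrow> (\<forall>s\<in>S. E x s)"

definition anticomplete_to :: "('a \<Rightarrow> 'a \<Rightarrow> bool) \<Rightarrow> 'a \<Rightarrow> 'a set \<Rightarrow> bool" where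
  "anticomplete_to E x S \<longleftrightarrow> (\<forall>s\<in>S. \<not> E x s)"

end

theory Submission
  imports Defs
begin

text \<open>After rotating the cycle we may take \<open>i = 0\<close>. Suppose \<open>x\<close> is adjacent to
  \<open>u \<in> S23(0)\<close> but not to \<open>w \<in> S23(0)\<close>. Then \<open>x\<close> is off the cycle (a cycle neighbour of \<open>u\<close>
  is one of \<open>w\<close>), and five configurations on vertices among \<open>v\<^sub>0, \<dots>, v\<^sub>4, u, w, x\<close> would be
  induced \<open>P\<^sub>5\<close>s or chairs unless \<open>x\<close> has certain neighbours on the cycle. These constraints,
  together with their images under the reflection \<open>k \<mapsto> -k\<close> (which fixes \<open>S23(0)\<close>), leave
  exactly the cycle neighbourhoods \<open>{v\<^sub>3, v\<^sub>0, v\<^sub>2}\<close>, \<open>{v\<^sub>1, \<dots>, v\<^sub>4}\<close> and \<open>{v\<^sub>0, \<dots>, v\<^sub>4}\<close>,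
  i.e. \<open>x \<in> S23(0) \<union> S4(0) \<union> S5\<close>.\<close>

lemma has_induced_listI:
  assumes "distinct ps" "set ps \<subseteq> V" "length ps = n"
    and "\<forall>i\<in>{0..<n}. \<forall>j\<in>{0..<n}. E (ps ! i) (ps ! j) \<longleftrightarrow> EH i j"
  shows "has_induced V E {0..<n} EH"
  unfolding has_induced_def
proof (intro exI conjI)
  show "inj_on (nth ps) {0..<n}"
    using assms(1,3) by (simp add: inj_on_def nth_eq_iff_index_eq)
  show "nth ps ` {0..<n} \<subseteq> V"
    using assms(2,3) nth_mem by fastforce
qed (use assms(4) in blast)

lemma ball_atLeast0LessThan_five: "(\<forall>i\<in>{0..<5::nat}. P i) \<longleftrightarrow> P 0 \<and> P 1 \<and> P 2 \<and> P 3 \<and> P 4"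
  by (auto simp: atLeast0LessThan lessThan_nat_numeral)

lemma no_induced_P5:
  assumes "H_free V E {0..<5::nat} P5_E" "simple_graph V E"
    and "distinct [p0, p1, p2, p3, p4]" "set [p0, p1, p2, p3, p4] \<subseteq> V"
    and "E p0 p1" "E p1 p2" "E p2 p3" "E p3 p4"
    and "\<not> E p0 p2" "\<not> E p0 p3" "\<not> E p0 p4" "\<not> E p1 p3" "\<not> E p1 p4" "\<not> E p2 p4"
  shows False
proof -
  have "E p q \<longleftrightarrow> E q p" "\<not> E p p" for p q
    using assms(2) unfolding simple_graph_def by blast+
  then have "has_induced V E {0..<5} P5_E"
    using assms(3-) by (intro has_induced_listI[where ps = "[p0, p1, p2, p3, p4]"])
      (simp_all add: ball_atLeast0LessThan_five P5_E_def)
  with assms(1) show False by (simp add: H_free_def)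
qed

lemma no_induced_chair:
  assumes "H_free V E {0..<5::nat} chair_E" "simple_graph V E"
    and "distinct [p0, p1, p2, p3, p4]" "set [p0, p1, p2, p3, p4] \<subseteq> V"
    and "E p0 p1" "E p1 p2" "E p2 p3" "E p1 p4"
    and "\<not> E p0 p2" "\<not> E p0 p3" "\<not> E p0 p4" "\<not> E p1 p3" "\<not> E p2 p4" "\<not> E p3 p4"
  shows False
proof -
  have "E p q \<longleftrightarrow> E q p" "\<not> E p p" for p q
    using assms(2) unfolding simple_graph_def by blast+
  then have "has_induced V E {0..<5} chair_E"
    using assms(3-) by (intro has_induced_listI[where ps = "[p0, p1, p2, p3, p4]"])
      (simp_all add: ball_atLeast0LessThan_five chair_E_def doubleton_eq_iff)
  with assms(1) show False by (simp add: H_free_def)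
qed

lemma induced_C5_reindex:
  assumes C: "induced_C5 V E v" and f: "bij_betw f {..<5} {..<5}"
    and adj: "\<And>p q. p < 5 \<Longrightarrow> q < 5 \<Longrightarrow>
      (f q = (f p + 1) mod 5 \<or> f p = (f q + 1) mod 5) \<longleftrightarrow> (q = (p + 1) mod 5 \<or> p = (q + 1) mod 5)"
  shows "induced_C5 V E (\<lambda>k. v (f k))"
  unfolding induced_C5_def
proof (intro conjI allI impI)
  have f_range: "p < 5 \<Longrightarrow> f p < 5" for p
    using f by (auto dest: bij_betw_apply)
  show "v (f p) \<in> V" if "p < 5" for p
    using C f_range[OF that] unfolding induced_C5_def by blast
  show "E (v (f p)) (v (f q)) \<longleftrightarrow> (q = (p + 1) mod 5 \<or> p = (q + 1) mod 5)"
    if "p < 5" "q < 5" for p q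
    using C f_range[OF that(1)] f_range[OF that(2)] adj[OF that] unfolding induced_C5_def by blast
  have "inj_on v (f ` {..<5})"
    using C f unfolding induced_C5_def bij_betw_def by simp
  then show "inj_on (\<lambda>k. v (f k)) {..<5}"
    using comp_inj_on[of f "{..<5}" v] f unfolding bij_betw_def comp_def by blast
qed

lemma C5_set_reindex:
  assumes "bij_betw f {..<5} {..<5}"
  shows "C5_set (\<lambda>k. v (f k)) = C5_set v"
  using bij_betw_imp_surj_on[OF assms] unfolding C5_set_def by (simp add: image_image[symmetric])

lemma less_five_cases: "p < (5::nat) \<longleftrightarrow> p = 0 \<or> p = 1 \<or> p = 2 \<or> p = 3 \<or> p = 4"
  by auto

lemma lessThan_five: "{..<5::nat} = {0, 1, 2, 3, 4}"
  by auto

lemma rotate5_bij: "i < 5 \<Longrightarrow> bij_betw (\<lambda>k. (i + k) mod 5) {..<5::nat} {..<5}"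
  unfolding less_five_cases lessThan_five
  by (elim disjE) (simp_all add: bij_betw_def insert_commute numeral_2_eq_2)

lemma reflect5_bij: "bij_betw (\<lambda>k. (5 - k) mod 5) {..<5::nat} {..<5}"
  unfolding lessThan_five by (simp add: bij_betw_def insert_commute)

lemma rotate5_adj:
  "i < 5 \<Longrightarrow> p < 5 \<Longrightarrow> q < (5::nat) \<Longrightarrow>
    ((i + q) mod 5 = ((i + p) mod 5 + 1) mod 5 \<or> (i + p) mod 5 = ((i + q) mod 5 + 1) mod 5)
    \<longleftrightarrow> (q = (p + 1) mod 5 \<or> p = (q + 1) mod 5)"
  unfolding less_five_cases by (elim disjE) simp_all

lemma reflect5_adj:
  "p < 5 \<Longrightarrow> q < (5::nat) \<Longrightarrow>
    ((5 - q) mod 5 = ((5 - p) mod 5 + 1) mod 5 \<or> (5 - p) mod 5 = ((5 - q) mod 5 + 1) mod 5)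
    \<longleftrightarrow> (q = (p + 1) mod 5 \<or> p = (q + 1) mod 5)"
  unfolding less_five_cases by (elim disjE) simp_all

lemma induced_C5_rotate:
  assumes "induced_C5 V E v" "i < 5"
  shows "induced_C5 V E (\<lambda>k. v ((i + k) mod 5))"
  by (rule induced_C5_reindex[OF assms(1) rotate5_bij[OF assms(2)] rotate5_adj[OF assms(2)]])

lemma induced_C5_reflect: "induced_C5 V E v \<Longrightarrow> induced_C5 V E (\<lambda>k. v ((5 - k) mod 5))"
  by (rule induced_C5_reindex[OF _ reflect5_bij reflect5_adj])

lemma S23_rotate: "i < 5 \<Longrightarrow> S23 V E (\<lambda>k. v ((i + k) mod 5)) 0 = S23 V E v i"
  unfolding S23_def N_C_def C5_set_reindex[OF rotate5_bij] by simp

lemma S4_rotate: "i < 5 \<Longrightarrow> S4 V E (\<lambda>k. v ((i + k) mod 5)) 0 = S4 V E v i"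
  unfolding S4_def N_C_def C5_set_reindex[OF rotate5_bij] by simp

lemma S5_rotate: "i < 5 \<Longrightarrow> S5 V E (\<lambda>k. v ((i + k) mod 5)) = S5 V E v"
  unfolding S5_def N_C_def C5_set_reindex[OF rotate5_bij] by simp

lemma S23_reflect: "S23 V E (\<lambda>k. v ((5 - k) mod 5)) 0 = S23 V E v 0"
  unfolding S23_def N_C_def C5_set_reindex[OF reflect5_bij]
  by (simp add: insert_commute numeral_2_eq_2)

lemma induced_C5_eq_iff: "induced_C5 V E v \<Longrightarrow> i < 5 \<Longrightarrow> j < 5 \<Longrightarrow> v i = v j \<longleftrightarrow> i = j"
  unfolding induced_C5_def by (meson inj_on_eq_iff lessThan_iff)

lemma S23_adj:
  assumes C: "induced_C5 V E v" and s: "s \<in> S23 V E v 0" and k: "k < 5"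
  shows "E s (v k) \<longleftrightarrow> k = 0 \<or> k = 2 \<or> k = 3"
proof -
  have "v k \<in> C5_set v" using k by (simp add: C5_set_def)
  then have "E s (v k) \<longleftrightarrow> v k \<in> N_C E v s" by (simp add: N_C_def)
  also have "N_C E v s = {v 3, v 0, v 2}" using s by (simp add: S23_def numeral_2_eq_2)
  finally show ?thesis using induced_C5_eq_iff[OF C k] by auto
qed

locale distinguishes_S23 =
  fixes V :: "'a set" and E :: "'a \<Rightarrow> 'a \<Rightarrow> bool" and a :: "nat \<Rightarrow> 'a" and u w x :: 'a
  assumes graph: "simple_graph V E"
    and P5_free: "H_free V E {0..<5::nat} P5_E"
    and chair_free: "H_free V E {0..<5::nat} chair_E"
    and cycle: "induced_C5 V E a"
    and u_S23: "u \<in> S23 V E a 0" and w_S23: "w \<in> S23 V E a 0"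
    and x_in_V: "x \<in> V" and x_u: "E x u" and x_w: "\<not> E x w"
begin

lemma E_sym: "E p q \<longleftrightarrow> E q p"
  using graph unfolding simple_graph_def by blast

lemma cycle_adj [simp]:
  "i < 5 \<Longrightarrow> j < 5 \<Longrightarrow> E (a i) (a j) \<longleftrightarrow> j = (i + 1) mod 5 \<or> i = (j + 1) mod 5"
  using cycle unfolding induced_C5_def by blast

lemma cycle_eq_iff [simp]: "i < 5 \<Longrightarrow> j < 5 \<Longrightarrow> a i = a j \<longleftrightarrow> i = j"
  by (rule induced_C5_eq_iff[OF cycle])

lemma cycle_in_V [simp]: "i < 5 \<Longrightarrow> a i \<in> V"
  using cycle unfolding induced_C5_def by blast

lemma S23_vertex:
  assumes "s \<in> S23 V E a 0"
  shows "s \<in> V" and "k < 5 \<Longrightarrow> s \<noteq> a k" and "k < 5 \<Longrightarrow> a k \<noteq> s"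
    and "k < 5 \<Longrightarrow> E s (a k) \<longleftrightarrow> k = 0 \<or> k = 2 \<or> k = 3"
    and "k < 5 \<Longrightarrow> E (a k) s \<longleftrightarrow> k = 0 \<or> k = 2 \<or> k = 3"
proof -
  show "s \<in> V" using assms by (simp add: S23_def)
  show "s \<noteq> a k" "a k \<noteq> s" if "k < 5"
    using assms that by (auto simp: S23_def C5_set_def)
  show "E s (a k) \<longleftrightarrow> k = 0 \<or> k = 2 \<or> k = 3" if "k < 5"
    by (rule S23_adj[OF cycle assms that])
  then show "E (a k) s \<longleftrightarrow> k = 0 \<or> k = 2 \<or> k = 3" if "k < 5"
    using that E_sym by blast
qed

lemmas u_facts [simp] = S23_vertex[OF u_S23] and w_facts [simp] = S23_vertex[OF w_S23]

lemma x_notin_cycle [simp]: "k < 5 \<Longrightarrow> x \<noteq> a k" "k < 5 \<Longrightarrow> a k \<noteq> x"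
proof -
  assume k: "k < 5"
  show "x \<noteq> a k"
  proof
    assume "x = a k"
    with x_u k have "k = 0 \<or> k = 2 \<or> k = 3" by simp
    with \<open>x = a k\<close> k x_w show False by auto
  qed
  then show "a k \<noteq> x" by blast
qed

lemma x_neq_u [simp]: "x \<noteq> u" "u \<noteq> x"
  using x_u graph unfolding simple_graph_def by blast+

lemma adj_a4_imp_adj_a1_or_a2: "E x (a 4) \<Longrightarrow> E x (a 1) \<or> E x (a 2)"
  using no_induced_P5[OF P5_free graph, of "a 1" "a 2" u x "a 4"] x_u x_in_V
  by (auto simp: E_sym[of x])

lemma adj_a1_a4_imp_adj_a2: "E x (a 1) \<Longrightarrow> E x (a 4) \<Longrightarrow> E x (a 2)"
  using no_induced_P5[OF P5_free graph, of "a 4" x "a 1" "a 2" w] x_w x_in_V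
  by (cases "x = w") (auto simp: E_sym[of x])

lemma adj_a0_or_a1_or_a4: "E x (a 0) \<or> E x (a 1) \<or> E x (a 4)"
  using no_induced_chair[OF chair_free graph, of "a 1" "a 0" u x "a 4"] x_u x_in_V
  by (auto simp: E_sym[of x])

lemma adj_a0_imp_adj_a1_or_a3: "E x (a 0) \<Longrightarrow> E x (a 1) \<or> E x (a 3)"
  using no_induced_chair[OF chair_free graph, of "a 1" "a 0" w "a 3" x] x_w x_in_V
  by (cases "x = w") (auto simp: E_sym[of x])

lemma adj_a2_a4_imp_adj_a1: "E x (a 2) \<Longrightarrow> E x (a 4) \<Longrightarrow> E x (a 1)"
  using no_induced_chair[OF chair_free graph, of "a 1" "a 2" x "a 4" w] x_w x_in_V
  by (cases "x = w") (auto simp: E_sym[of x])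

lemma x_in_S23_S4_S5: "x \<in> S23 V E a 0 \<union> S4 V E a 0 \<union> S5 V E a"
proof -
  interpret mirror: distinguishes_S23 V E "\<lambda>k. a ((5 - k) mod 5)" u w x
    by unfold_locales
      (simp_all add: graph P5_free chair_free induced_C5_reflect[OF cycle] S23_reflect
        u_S23 w_S23 x_in_V x_u x_w)
  note rules = adj_a4_imp_adj_a1_or_a2 adj_a1_a4_imp_adj_a2 adj_a0_or_a1_or_a4
    adj_a0_imp_adj_a1_or_a3 adj_a2_a4_imp_adj_a1
  have mirror_rules:
    "E x (a 1) \<Longrightarrow> E x (a 4) \<or> E x (a 3)"
    "E x (a 4) \<Longrightarrow> E x (a 1) \<Longrightarrow> E x (a 3)"
    "E x (a 0) \<Longrightarrow> E x (a 4) \<or> E x (a 2)"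
    "E x (a 3) \<Longrightarrow> E x (a 1) \<Longrightarrow> E x (a 4)"
    using mirror.adj_a4_imp_adj_a1_or_a2 mirror.adj_a1_a4_imp_adj_a2
      mirror.adj_a0_imp_adj_a1_or_a3 mirror.adj_a2_a4_imp_adj_a1 by simp_all
  have x_outside: "x \<in> V - C5_set a"
    using x_in_V by (auto simp: C5_set_def)
  have N_x: "N_C E a x = {c \<in> {a 0, a 1, a 2, a 3, a 4}. E x c}"
    by (simp add: N_C_def C5_set_def lessThan_five)
  consider "E x (a 0)" "\<not> E x (a 1)" "E x (a 2)" "E x (a 3)" "\<not> E x (a 4)"
    | "\<not> E x (a 0)" "E x (a 1)" "E x (a 2)" "E x (a 3)" "E x (a 4)"
    | "E x (a 0)" "E x (a 1)" "E x (a 2)" "E x (a 3)" "E x (a 4)"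
    using rules mirror_rules by blast
  then show ?thesis
  proof cases
    case 1
    then have "N_C E a x = {a 3, a 0, a 2}" unfolding N_x by auto
    with x_outside show ?thesis by (simp add: S23_def numeral_2_eq_2)
  next
    case 2
    then have "N_C E a x = {a 3, a 4, a 1, a 2}" unfolding N_x by auto
    with x_outside show ?thesis by (simp add: S4_def numeral_2_eq_2)
  next
    case 3
    then have "N_C E a x = C5_set a" unfolding N_x by (auto simp: C5_set_def lessThan_five)
    with x_outside show ?thesis by (simp add: S5_def)
  qed
qed

end

theorem mainTheorem7:
  fixes V :: "'a set" and E :: "'a \<Rightarrow> 'a \<Rightarrow> bool" and v :: "nat \<Rightarrow> 'a"
  assumes "simple_graph V E"
    and "vertex_critical V E 5"
    and "H_free V E {0..<5::nat} P5_E"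
    and "H_free V E {0..<5::nat} chair_E"
    and "induced_C5 V E v"
  shows "\<forall>i<5. \<forall>x \<in> V - (S23 V E v i \<union> S4 V E v i \<union> S5 V E v).
           complete_to E x (S23 V E v i) \<or> anticomplete_to E x (S23 V E v i)"
proof (intro allI impI ballI)
  fix i x
  assume i: "i < (5::nat)" and x: "x \<in> V - (S23 V E v i \<union> S4 V E v i \<union> S5 V E v)"
  show "complete_to E x (S23 V E v i) \<or> anticomplete_to E x (S23 V E v i)"
  proof (rule ccontr)
    assume "\<not> ?thesis"
    then obtain u w where u: "u \<in> S23 V E v i" "E x u" and w: "w \<in> S23 V E v i" "\<not> E x w"
      unfolding complete_to_def anticomplete_to_def by blast
    interpret distinguishes_S23 V E "\<lambda>k. v ((i + k) mod 5)" u w x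
      using assms(1,3,4) induced_C5_rotate[OF assms(5) i] u w x
      by unfold_locales (simp_all add: S23_rotate[OF i])
    from x_in_S23_S4_S5 x show False
      by (simp add: S23_rotate[OF i] S4_rotate[OF i] S5_rotate[OF i])
  qed
qed

end
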